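(* Let $b\ge3$, $2\le j\le b-1$ and $0<\epsilon<\frac1b$. Then $\widehat M_1$ is attained, up to applying a common permutation to the coordinates of $p$ and $q$ and up to interchanging $p$ and $q$, at a pair of the form $p=(\epsilon^{(l_1)},\alpha^{(l_2)},\beta^{(b-l_1-l_2)})$, $q=(\delta^{(l_1)},\epsilon^{(l_2)},\eta^{(b-l_1-l_2)})$, with nonnegative integers $l_1,l_2$, $\alpha,\beta,\delta,\eta\ge\epsilon$ and $l_1\epsilon+l_2\alpha+(b-l_1-l_2)\beta=1=l_1\delta+l_2\epsilon+(b-l_1-l_2)\eta$.
   Context: For an integer $1\le j\le b-1$ and vectors $p,q\in\mathbb R^b$, $$\Psi_j(p;q)=\frac{1}{(b-j-1)!}\sum_{\sigma\in S_b}\Big(p_{\sigma(1)}\cdots p_{\sigma(j)}\,q_{\sigma(j+1)}+q_{\sigma(1)}\cdots q_{\sigma(j)}\,p_{\sigma(j+1)}\Big),$$ where $S_b$ is the set of permutations of $\{1,\dots,b\}$. $x^{(m)}$ denotes $m$ consecutive coordinates equal to $x$. Let $\mathcal P_b$ be the set of probability vectors in $\mathbb R^b$, $\widehat{\mathcal P}_b^0=\{p\in\mathcal P_b:p_i\ge\epsilon\ \forall i\}$ and $\widehat M_1=\sup_{p,q\in\widehat{\mathcal P}_b^0}\Psi_j(p;q)$. *)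

theory Defs
  imports "HOL-Analysis.Analysis" "HOL-Combinatorics.Permutations"
begin

text \<open>Vectors in R^b are represented as functions nat => real; only the
coordinates 0,...,b-1 are relevant (coordinate i+1 of the paper is index i here).\<close>

definition Psi :: "nat \<Rightarrow> nat \<Rightarrow> (nat \<Rightarrow> real) \<Rightarrow> (nat \<Rightarrow> real) \<Rightarrow> real" where
  "Psi b j p q = (1 / fact (b - j - 1)) *
     (\<Sum>\<sigma> | \<sigma> permutes {..<b}.
        (\<Prod>i<j. p (\<sigma> i)) * q (\<sigma> j) + (\<Prod>i<j. q (\<sigma> i)) * p (\<sigma> j))"

definition prob_vecs :: "nat \<Rightarrow> (nat \<Rightarrow> real) set" where
  "prob_vecs b = {p. (\<forall>i<b. 0 \<le> p i) \<and> (\<Sum>i<b. p i) = 1}"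

definition prob_vecs_eps :: "nat \<Rightarrow> real \<Rightarrow> (nat \<Rightarrow> real) set" where
  "prob_vecs_eps b \<epsilon> = {p \<in> prob_vecs b. \<forall>i<b. \<epsilon> \<le> p i}"

definition M1hat :: "nat \<Rightarrow> nat \<Rightarrow> real \<Rightarrow> real" where
  "M1hat b j \<epsilon> = (SUP pq \<in> prob_vecs_eps b \<epsilon> \<times> prob_vecs_eps b \<epsilon>. Psi b j (fst pq) (snd pq))"

definition block3 :: "nat \<Rightarrow> nat \<Rightarrow> real \<Rightarrow> real \<Rightarrow> real \<Rightarrow> nat \<Rightarrow> real" where
  "block3 l1 l2 x y z i = (if i < l1 then x else if i < l1 + l2 then y else z)"

end

theory Submission
  imports Defs "HOL-Computational_Algebra.Polynomial"
begin

text \<open>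
  A maximizing pair exists by compactness. Fix two coordinates \<open>k \<noteq> l\<close> and move \<open>p\<close> and \<open>q\<close>
  simultaneously along the lines through their \<open>k,l\<close>-averages in the direction \<open>e\<^sub>k - e\<^sub>l\<close>. Each
  summand of \<open>Psi\<close> contains every coordinate at most once, so along such lines \<open>Psi\<close> is a polynomial
  of degree at most 2 in the line parameter \<open>t\<close>, and the transposition of \<open>k\<close> and \<open>l\<close> makes it
  even: \<open>Psi = c\<^sub>0 + c\<^sub>2 t\<^sup>2\<close>.

  If \<open>p k = p l\<close> but \<open>q k \<noteq> q l\<close>, averaging \<open>q\<close> strictly increases \<open>Psi\<close> (here \<open>j \<ge> 2\<close> is used),
  so at a maximizer equal \<open>p\<close>-coordinates force equal \<open>q\<close>-coordinates and vice versa. Among all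
  maximizers take one with the fewest coordinates at which both \<open>p\<close> and \<open>q\<close> exceed \<open>\<epsilon>\<close>. On two such
  coordinates maximality gives \<open>c\<^sub>2 \<ge> 0\<close>, so unless \<open>p\<close> and \<open>q\<close> already agree there, pushing \<open>t\<close>
  until a coordinate reaches \<open>\<epsilon>\<close> yields a maximizer with fewer of them. Hence the coordinates split
  into three blocks, \<open>p = \<epsilon>\<close>, \<open>q = \<epsilon>\<close> and neither, on each of which \<open>(p, q)\<close> is constant.
\<close>

lemma Psi_swap: "Psi b j p q = Psi b j q p"
  unfolding Psi_def by (simp add: add.commute)

definition Psi_term :: "nat \<Rightarrow> (nat \<Rightarrow> real) \<Rightarrow> (nat \<Rightarrow> real) \<Rightarrow> (nat \<Rightarrow> nat) \<Rightarrow> real" where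
  "Psi_term j p q \<sigma> = (\<Prod>i<j. p (\<sigma> i)) * q (\<sigma> j) + (\<Prod>i<j. q (\<sigma> i)) * p (\<sigma> j)"

lemma Psi_eq_sum_Psi_term:
  "Psi b j p q = (1 / fact (b - j - 1)) * (\<Sum>\<sigma> | \<sigma> permutes {..<b}. Psi_term j p q \<sigma>)"
  by (simp add: Psi_def Psi_term_def)

lemma Psi_permute:
  assumes "\<tau> permutes {..<b}"
  shows "Psi b j (p \<circ> \<tau>) (q \<circ> \<tau>) = Psi b j p q"
  unfolding Psi_eq_sum_Psi_term
  using setum_permutations_compose_left[OF assms, of "Psi_term j p q"] by (simp add: Psi_term_def o_def)

lemma Psi_cong:
  assumes "j < b" "\<And>i. i < b \<Longrightarrow> p i = p' i" "\<And>i. i < b \<Longrightarrow> q i = q' i"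
  shows "Psi b j p q = Psi b j p' q'"
  unfolding Psi_eq_sum_Psi_term
proof (intro arg_cong[where f = "\<lambda>x. _ * x"] sum.cong refl)
  fix \<sigma> assume "\<sigma> \<in> {\<sigma>. \<sigma> permutes {..<b}}"
  then have \<sigma>: "\<sigma> i < b" if "i \<le> j" for i
    using permutes_in_image that assms(1) by fastforce
  have "(\<Prod>i<j. p (\<sigma> i)) = (\<Prod>i<j. p' (\<sigma> i))" "(\<Prod>i<j. q (\<sigma> i)) = (\<Prod>i<j. q' (\<sigma> i))"
    using \<sigma> assms(2,3) by (auto intro!: prod.cong)
  then show "Psi_term j p q \<sigma> = Psi_term j p' q' \<sigma>"
    using \<sigma> assms(2,3) by (simp add: Psi_term_def)
qed

definition pair_avg :: "nat \<Rightarrow> nat \<Rightarrow> (nat \<Rightarrow> real) \<Rightarrow> nat \<Rightarrow> real" where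
  "pair_avg k l p = p(k := (p k + p l) / 2, l := (p k + p l) / 2)"

definition pair_line :: "nat \<Rightarrow> nat \<Rightarrow> real \<Rightarrow> (nat \<Rightarrow> real) \<Rightarrow> nat \<Rightarrow> real" where
  "pair_line k l t p x = pair_avg k l p x + t * (p x - pair_avg k l p x)"

lemma pair_line_0 [simp]: "pair_line k l 0 p = pair_avg k l p"
  by (simp add: pair_line_def fun_eq_iff)

lemma pair_line_1 [simp]: "pair_line k l 1 p = p"
  by (simp add: pair_line_def fun_eq_iff)

lemma pair_line_apply:
  assumes "k \<noteq> l"
  shows "pair_line k l t p k = (p k + p l) / 2 + t * ((p k - p l) / 2)"
    and "pair_line k l t p l = (p k + p l) / 2 - t * ((p k - p l) / 2)"
  using assms by (simp_all add: pair_line_def pair_avg_def field_simps)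

lemma pair_line_other: "x \<noteq> k \<Longrightarrow> x \<noteq> l \<Longrightarrow> pair_line k l t p x = p x"
  by (simp add: pair_line_def pair_avg_def)

lemma pair_line_uminus:
  assumes "k \<noteq> l"
  shows "pair_line k l (- t) p = pair_line k l t p \<circ> Transposition.transpose k l"
  using assms by (auto simp: fun_eq_iff Transposition.transpose_def pair_line_apply pair_line_other)

lemma sum_pair_line:
  assumes "k < b" "l < b" "k \<noteq> l"
  shows "(\<Sum>i<b. pair_line k l t p i) = (\<Sum>i<b. p i)"
proof -
  have split: "(\<Sum>i<b. f i) = f k + f l + (\<Sum>i\<in>{..<b} - {k} - {l}. f i)" for f :: "nat \<Rightarrow> real"
    using assms by (simp add: sum.remove[of "{..<b}" k] sum.remove[of "{..<b} - {k}" l])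
  have "(\<Sum>i\<in>{..<b} - {k} - {l}. pair_line k l t p i) = (\<Sum>i\<in>{..<b} - {k} - {l}. p i)"
    by (rule sum.cong) (auto simp: pair_line_other)
  then show ?thesis
    using assms by (simp add: split[of p] split[of "pair_line k l t p"] pair_line_apply)
qed

definition mixed :: "(nat \<Rightarrow> 'a) \<Rightarrow> (nat \<Rightarrow> 'a) \<Rightarrow> nat \<Rightarrow> (nat \<Rightarrow> nat) \<Rightarrow> nat \<Rightarrow> 'a" where
  "mixed u v j \<sigma> i = (if i < j then u (\<sigma> i) else v (\<sigma> i))"

lemma prod_mixed: "(\<Prod>i\<le>j. mixed u v j \<sigma> i) = (\<Prod>i<j. u (\<sigma> i)) * (v (\<sigma> j) :: 'a :: comm_monoid_mult)"
proof -
  have "(\<Prod>i<j. mixed u v j \<sigma> i) = (\<Prod>i<j. u (\<sigma> i))"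
    by (rule prod.cong) (simp_all add: mixed_def)
  then show ?thesis
    by (simp add: lessThan_Suc_atMost[symmetric] mixed_def)
qed

lemma degree_prod_linear_le:
  assumes "finite I"
  shows "degree (\<Prod>i\<in>I. [:c i, d i:]) \<le> card {i\<in>I. d i \<noteq> 0}"
proof -
  have "degree (\<Prod>i\<in>I. [:c i, d i:]) \<le> (\<Sum>i\<in>I. degree [:c i, d i:])"
    using degree_prod_sum_le[OF assms, of "\<lambda>i. [:c i, d i:]"] by (simp only: o_def)
  also have "\<dots> = (\<Sum>i\<in>I. if d i = 0 then 0 else 1)"
    by (rule sum.cong) auto
  also have "\<dots> = card {i\<in>I. d i \<noteq> 0}"
    using assms by (simp add: sum.If_cases Int_def)
  finally show ?thesis .
qed

lemma card_mixed_support_le: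
  assumes "inj \<sigma>" "finite K" "\<And>x. x \<notin> K \<Longrightarrow> u x = 0" "\<And>x. x \<notin> K \<Longrightarrow> v x = 0"
  shows "card {i\<in>I. mixed u v j \<sigma> i \<noteq> 0} \<le> card K"
proof (rule card_inj_on_le)
  show "inj_on \<sigma> {i\<in>I. mixed u v j \<sigma> i \<noteq> 0}"
    using assms(1) by (rule inj_on_subset) simp
  show "\<sigma> ` {i\<in>I. mixed u v j \<sigma> i \<noteq> 0} \<subseteq> K"
    using assms(3,4) by (auto simp: mixed_def split: if_splits)
qed (fact assms(2))

lemma Psi_affine_quadratic_poly:
  fixes u v du dv :: "nat \<Rightarrow> real"
  assumes "\<And>x. x \<noteq> k \<Longrightarrow> x \<noteq> l \<Longrightarrow> du x = 0 \<and> dv x = 0"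
  shows "\<exists>P. degree P \<le> 2 \<and>
    (\<forall>t. Psi b j (\<lambda>x. u x + t * du x) (\<lambda>x. v x + t * dv x) = poly P t)"
proof -
  define F where "F u v du dv \<sigma> = (\<Prod>i\<le>j. [:mixed u v j \<sigma> i, mixed du dv j \<sigma> i:])"
    for u v du dv :: "nat \<Rightarrow> real" and \<sigma>
  define P where "P = smult (1 / fact (b - j - 1))
    (\<Sum>\<sigma> | \<sigma> permutes {..<b}. F u v du dv \<sigma> + F v u dv du \<sigma>)"
  have poly_F: "poly (F u v du dv \<sigma>) t = (\<Prod>i<j. u (\<sigma> i) + t * du (\<sigma> i)) * (v (\<sigma> j) + t * dv (\<sigma> j))"
    for u v du dv :: "nat \<Rightarrow> real" and \<sigma> t
  proof -
    have "poly [:mixed u v j \<sigma> i, mixed du dv j \<sigma> i:] t =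
        mixed (\<lambda>x. u x + t * du x) (\<lambda>x. v x + t * dv x) j \<sigma> i" for i
      by (simp add: mixed_def)
    then show ?thesis
      by (simp add: F_def poly_prod prod_mixed)
  qed
  have degree_F: "degree (F u v du dv \<sigma>) \<le> 2" if "\<sigma> permutes {..<b}"
    and "\<And>x. x \<noteq> k \<Longrightarrow> x \<noteq> l \<Longrightarrow> du x = 0 \<and> dv x = 0"
    for u v du dv :: "nat \<Rightarrow> real" and \<sigma>
  proof -
    have "degree (F u v du dv \<sigma>) \<le> card {i\<in>{..j}. mixed du dv j \<sigma> i \<noteq> 0}"
      unfolding F_def by (rule degree_prod_linear_le) simp
    also have "\<dots> \<le> card {k, l}"
      using that by (intro card_mixed_support_le permutes_inj) auto
    also have "\<dots> \<le> 2"
      by (simp add: card_insert_if)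
    finally show ?thesis .
  qed
  have "degree P \<le> 2"
    unfolding P_def using assms
    by (intro order.trans[OF degree_smult_le] degree_sum_le finite_permutations degree_add_le)
       (auto intro!: degree_F)
  moreover have "Psi b j (\<lambda>x. u x + t * du x) (\<lambda>x. v x + t * dv x) = poly P t" for t
    by (simp add: P_def Psi_def poly_sum poly_F)
  ultimately show ?thesis by blast
qed

lemma even_quadratic_poly:
  fixes P :: "real poly"
  assumes "degree P \<le> 2" "poly P (- 1) = poly P 1"
  shows "poly P t = poly P 0 + t\<^sup>2 * (poly P 1 - poly P 0)"
proof -
  have expand: "poly P x = coeff P 0 + coeff P 1 * x + coeff P 2 * x\<^sup>2" for x
  proof -
    have "poly P x = (\<Sum>i\<le>2. coeff P i * x ^ i)"
      unfolding poly_altdef using assms(1)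
      by (intro sum.mono_neutral_left) (auto simp: coeff_eq_0)
    then show ?thesis by (simp add: numeral_2_eq_2)
  qed
  show ?thesis
    using assms(2) by (simp add: expand[of t] expand[of 0] expand[of 1] expand[of "-1"])
qed

lemma Psi_pair_line:
  assumes "k < b" "l < b" "k \<noteq> l"
  shows "Psi b j (pair_line k l t p) (pair_line k l t q) =
    Psi b j (pair_avg k l p) (pair_avg k l q) +
    t\<^sup>2 * (Psi b j p q - Psi b j (pair_avg k l p) (pair_avg k l q))"
proof -
  obtain P where P: "degree P \<le> 2" "\<And>t. Psi b j (pair_line k l t p) (pair_line k l t q) = poly P t"
    using Psi_affine_quadratic_poly[of k l "\<lambda>x. p x - pair_avg k l p x" "\<lambda>x. q x - pair_avg k l q x"
        b j "pair_avg k l p" "pair_avg k l q"]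
    by (auto simp: pair_line_def[abs_def] pair_avg_def)
  have "Transposition.transpose k l permutes {..<b}"
    using assms by (intro permutes_swap_id) auto
  then have "poly P (- 1) = poly P 1"
    using Psi_permute unfolding P(2)[symmetric] pair_line_uminus[OF assms(3)] by simp
  from even_quadratic_poly[OF P(1) this] show ?thesis
    by (simp add: P(2)[symmetric])
qed

lemma prod_split_pair:
  assumes "finite S" "k \<noteq> l"
  shows "prod f S = (if k \<in> S then f k else 1) * (if l \<in> S then f l else 1) * prod f (S - {k, l})"
proof -
  have "prod f (S \<inter> {k, l}) = (if k \<in> S then f k else 1) * (if l \<in> S then f l else 1)"
    using assms(2) by (cases "k \<in> S"; cases "l \<in> S") (simp_all add: Int_insert_right)
  then show ?thesis
    using prod.Int_Diff[OF assms(1), of f "{k, l}"] by simp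
qed

lemma add_transpose_eq_pair_avg:
  "k \<noteq> l \<Longrightarrow> q x + q (Transposition.transpose k l x) = 2 * pair_avg k l q x"
  by (simp add: pair_avg_def Transposition.transpose_def)

lemma prod_add_prod_transpose:
  fixes q :: "nat \<Rightarrow> real"
  assumes "finite S" "k \<noteq> l"
  shows "(\<Prod>x\<in>S. q x) + (\<Prod>x\<in>S. q (Transposition.transpose k l x)) =
    2 * (\<Prod>x\<in>S. pair_avg k l q x) -
    (if k \<in> S \<and> l \<in> S then (q k - q l)\<^sup>2 / 2 * (\<Prod>x\<in>S - {k, l}. q x) else 0)"
proof -
  let ?R = "\<Prod>x\<in>S - {k, l}. q x"
  have "(\<Prod>x\<in>S - {k, l}. f x) = ?R"
    if "\<And>x. x \<noteq> k \<Longrightarrow> x \<noteq> l \<Longrightarrow> f x = q x" for f :: "nat \<Rightarrow> real"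
    using that by (intro prod.cong) auto
  then have "(\<Prod>x\<in>S - {k, l}. q (Transposition.transpose k l x)) = ?R"
    "(\<Prod>x\<in>S - {k, l}. pair_avg k l q x) = ?R"
    by (auto simp: pair_avg_def)
  moreover have "q (Transposition.transpose k l k) = q l" "q (Transposition.transpose k l l) = q k"
    "pair_avg k l q k = (q k + q l) / 2" "pair_avg k l q l = (q k + q l) / 2"
    using assms(2) by (simp_all add: pair_avg_def)
  ultimately show ?thesis
    unfolding prod_split_pair[OF assms, of q] prod_split_pair[OF assms, of "pair_avg k l q"]
      prod_split_pair[OF assms, of "\<lambda>x. q (Transposition.transpose k l x)"]
    by (cases "k \<in> S"; cases "l \<in> S") (simp_all add: power2_eq_square algebra_simps add_divide_distrib diff_divide_distrib)
qed

lemma exists_permutes_0_1: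
  fixes k l b :: nat
  assumes "k < b" "l < b" "k \<noteq> l"
  obtains \<sigma> where "\<sigma> permutes {..<b}" "\<sigma> 0 = k" "\<sigma> 1 = l"
proof
  define m where "m = Transposition.transpose 0 k l"
  have "m \<noteq> 0" "m < b"
    using assms by (auto simp: m_def Transposition.transpose_def)
  then have "1 < b"
    by linarith
  with \<open>m < b\<close> show "(Transposition.transpose 0 k \<circ> Transposition.transpose 1 m) permutes {..<b}"
    using assms by (intro permutes_compose permutes_swap_id) auto
  show "(Transposition.transpose 0 k \<circ> Transposition.transpose 1 m) 0 = k"
    using \<open>m \<noteq> 0\<close> by (simp add: Transposition.transpose_def)
  show "(Transposition.transpose 0 k \<circ> Transposition.transpose 1 m) 1 = l"
    using \<open>m \<noteq> 0\<close> assms(3) by (auto simp: m_def Transposition.transpose_def)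
qed

lemma Psi_term_add_transpose:
  fixes p q :: "nat \<Rightarrow> real"
  assumes "inj_on \<sigma> {..<j}" "k \<noteq> l"
  shows "Psi_term j p q \<sigma> + Psi_term j p (q \<circ> Transposition.transpose k l) \<sigma> =
    2 * Psi_term j p (pair_avg k l q) \<sigma> -
    (if k \<in> \<sigma> ` {..<j} \<and> l \<in> \<sigma> ` {..<j} then (q k - q l)\<^sup>2 / 2 else 0) *
      ((\<Prod>x\<in>\<sigma> ` {..<j} - {k, l}. q x) * p (\<sigma> j))"
proof -
  let ?\<tau> = "Transposition.transpose k l"
  have reindex: "(\<Prod>i<j. f (\<sigma> i)) = (\<Prod>x\<in>\<sigma> ` {..<j}. f x)" for f :: "nat \<Rightarrow> real"
    using assms(1) by (simp add: prod.reindex)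
  have "Psi_term j p q \<sigma> + Psi_term j p (q \<circ> ?\<tau>) \<sigma> =
      (\<Prod>x\<in>\<sigma> ` {..<j}. p x) * (q (\<sigma> j) + q (?\<tau> (\<sigma> j))) +
      ((\<Prod>x\<in>\<sigma> ` {..<j}. q x) + (\<Prod>x\<in>\<sigma> ` {..<j}. q (?\<tau> x))) * p (\<sigma> j)"
    by (simp add: Psi_term_def reindex[of p] reindex[of q] reindex[of "\<lambda>x. q (?\<tau> x)"] algebra_simps)
  also have "\<dots> = 2 * Psi_term j p (pair_avg k l q) \<sigma> -
    (if k \<in> \<sigma> ` {..<j} \<and> l \<in> \<sigma> ` {..<j} then (q k - q l)\<^sup>2 / 2 else 0) *
      ((\<Prod>x\<in>\<sigma> ` {..<j} - {k, l}. q x) * p (\<sigma> j))"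
    unfolding prod_add_prod_transpose[OF finite_imageI[OF finite_lessThan] assms(2)]
      add_transpose_eq_pair_avg[OF assms(2)]
    by (simp add: Psi_term_def reindex[of p] reindex[of "pair_avg k l q"] algebra_simps)
  finally show ?thesis .
qed

text \<open>As \<open>p\<close> is symmetric in \<open>k, l\<close>, replacing \<open>q\<close> by \<open>q \<circ> transpose k l\<close> does not change \<open>Psi\<close>; averaging the
  two leaves the terms linear in \<open>q\<close> unchanged and strictly increases the products over the first
  \<open>j\<close> positions that contain both \<open>k\<close> and \<open>l\<close>.\<close>

lemma Psi_lt_Psi_pair_avg:
  fixes p q :: "nat \<Rightarrow> real"
  assumes j: "2 \<le> j" "j < b" and kl: "k < b" "l < b" "k \<noteq> l"
    and "p k = p l" "q k \<noteq> q l" and pos: "\<And>i. i < b \<Longrightarrow> 0 < p i" "\<And>i. i < b \<Longrightarrow> 0 < q i"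
  shows "Psi b j p q < Psi b j p (pair_avg k l q)"
proof -
  let ?\<tau> = "Transposition.transpose k l"
  let ?S = "{\<sigma>. \<sigma> permutes {..<b}}"
  define D where "D \<sigma> = (if k \<in> \<sigma> ` {..<j} \<and> l \<in> \<sigma> ` {..<j} then (q k - q l)\<^sup>2 / 2 else 0) *
      ((\<Prod>x\<in>\<sigma> ` {..<j} - {k, l}. q x) * p (\<sigma> j))" for \<sigma>
  have term_avg: "Psi_term j p q \<sigma> + Psi_term j p (q \<circ> ?\<tau>) \<sigma> = 2 * Psi_term j p (pair_avg k l q) \<sigma> - D \<sigma>"
    if "\<sigma> permutes {..<b}" for \<sigma>
    unfolding D_def
    by (rule Psi_term_add_transpose[OF inj_on_subset[OF permutes_inj[OF that] subset_UNIV] kl(3)])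
  have rest_pos: "0 < (\<Prod>x\<in>\<sigma> ` {..<j} - {k, l}. q x) * p (\<sigma> j)" if "\<sigma> permutes {..<b}" for \<sigma>
  proof -
    have lt: "\<sigma> i < b" if "i \<le> j" for i
      using permutes_in_image[OF \<open>\<sigma> permutes {..<b}\<close>] that j(2) by simp
    then have "0 < (\<Prod>x\<in>\<sigma> ` {..<j} - {k, l}. q x)"
      by (intro prod_pos) (use pos in force)
    then show ?thesis
      using pos(1)[OF lt[of j]] by simp
  qed
  have D_nonneg: "0 \<le> D \<sigma>" if "\<sigma> permutes {..<b}" for \<sigma>
    unfolding D_def by (rule mult_nonneg_nonneg[OF _ less_imp_le[OF rest_pos[OF that]]]) simp
  obtain \<sigma>\<^sub>0 where \<sigma>\<^sub>0: "\<sigma>\<^sub>0 permutes {..<b}" "\<sigma>\<^sub>0 0 = k" "\<sigma>\<^sub>0 1 = l"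
    using exists_permutes_0_1[OF kl] .
  have "k \<in> \<sigma>\<^sub>0 ` {..<j}" "l \<in> \<sigma>\<^sub>0 ` {..<j}"
    using \<sigma>\<^sub>0(2,3) j(1) by (auto intro!: image_eqI)
  then have "0 < D \<sigma>\<^sub>0"
    using \<open>q k \<noteq> q l\<close> unfolding D_def by (intro mult_pos_pos[OF _ rest_pos[OF \<sigma>\<^sub>0(1)]]) simp
  then have "(\<Sum>\<sigma>\<in>?S. Psi_term j p q \<sigma> + Psi_term j p (q \<circ> ?\<tau>) \<sigma>) <
      (\<Sum>\<sigma>\<in>?S. 2 * Psi_term j p (pair_avg k l q) \<sigma>)"
    using \<sigma>\<^sub>0(1) D_nonneg by (intro sum_strict_mono_ex1 finite_permutations) (auto simp: term_avg)
  moreover have "Psi b j p (q \<circ> ?\<tau>) = Psi b j p q"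
  proof -
    have "p \<circ> ?\<tau> = p"
      using \<open>p k = p l\<close> by (auto simp: Transposition.transpose_def)
    moreover have "?\<tau> permutes {..<b}"
      using kl by (intro permutes_swap_id) auto
    ultimately show ?thesis
      using Psi_permute[of ?\<tau> b j p q] by simp
  qed
  ultimately show ?thesis
    unfolding Psi_eq_sum_Psi_term by (simp add: sum.distrib sum_distrib_left[symmetric] divide_simps)
qed

lemma pair_line_mem_prob_vecs_eps:
  assumes "p \<in> prob_vecs_eps b \<epsilon>" "0 \<le> \<epsilon>" "k < b" "l < b" "k \<noteq> l"
    and "\<bar>t * ((p k - p l) / 2)\<bar> \<le> (p k + p l) / 2 - \<epsilon>"
  shows "pair_line k l t p \<in> prob_vecs_eps b \<epsilon>"
proof -
  have "\<epsilon> \<le> pair_line k l t p k" "\<epsilon> \<le> pair_line k l t p l"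
    using assms(6) unfolding pair_line_apply[OF assms(5)] abs_le_iff by linarith+
  then have "\<epsilon> \<le> pair_line k l t p i" if "i < b" for i
    using assms(1) that by (cases "i = k \<or> i = l") (auto simp: pair_line_other prob_vecs_eps_def)
  then show ?thesis
    using assms(1-5) sum_pair_line[of k b l t p]
    by (auto simp: prob_vecs_eps_def prob_vecs_def intro: order_trans)
qed

definition is_maximizer :: "nat \<Rightarrow> nat \<Rightarrow> real \<Rightarrow> (nat \<Rightarrow> real) \<Rightarrow> (nat \<Rightarrow> real) \<Rightarrow> bool" where
  "is_maximizer b j \<epsilon> p q \<longleftrightarrow> p \<in> prob_vecs_eps b \<epsilon> \<and> q \<in> prob_vecs_eps b \<epsilon> \<and>
     (\<forall>p' \<in> prob_vecs_eps b \<epsilon>. \<forall>q' \<in> prob_vecs_eps b \<epsilon>. Psi b j p' q' \<le> Psi b j p q)"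

lemma is_maximizer_swap: "is_maximizer b j \<epsilon> p q \<Longrightarrow> is_maximizer b j \<epsilon> q p"
  unfolding is_maximizer_def by (metis Psi_swap)

lemma M1hat_eq_Psi_maximizer:
  assumes "is_maximizer b j \<epsilon> p q"
  shows "M1hat b j \<epsilon> = Psi b j p q"
  unfolding M1hat_def
proof (rule cSup_eq_maximum)
  show "Psi b j p q \<in> (\<lambda>pq. Psi b j (fst pq) (snd pq)) ` (prob_vecs_eps b \<epsilon> \<times> prob_vecs_eps b \<epsilon>)"
    using assms unfolding is_maximizer_def by (auto intro!: image_eqI[of _ _ "(p, q)"])
qed (use assms in \<open>auto simp: is_maximizer_def\<close>)

lemma compact_simplex_box:
  "compact (PiE UNIV (\<lambda>i. if i < b then {\<epsilon>..1} else {0}) \<inter> {p :: nat \<Rightarrow> real. (\<Sum>i<b. p i) = 1})"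
proof (rule compact_Int_closed)
  have "compactin (product_topology (\<lambda>_. euclidean) UNIV) (PiE UNIV (\<lambda>i. if i < b then {\<epsilon>..1::real} else {0}))"
    by (subst compactin_PiE) auto
  then show "compact (PiE UNIV (\<lambda>i. if i < b then {\<epsilon>..1::real} else {0}))"
    by (simp add: euclidean_product_topology)
  show "closed {p :: nat \<Rightarrow> real. (\<Sum>i<b. p i) = 1}"
    by (intro closed_Collect_eq continuous_on_sum) auto
qed

lemma continuous_on_Psi: "continuous_on S (\<lambda>z. Psi b j (fst z) (snd z))"
proof -
  have "continuous_on S (\<lambda>z. fst z x)" "continuous_on S (\<lambda>z. snd z x)" for x
    by (rule continuous_on_compose2[OF continuous_on_product_coordinates continuous_on_fst[OF continuous_on_id]]
        continuous_on_compose2[OF continuous_on_product_coordinates continuous_on_snd[OF continuous_on_id]]; simp)+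
  then show ?thesis
    unfolding Psi_def by (intro continuous_intros)
qed

text \<open>\<open>prob_vecs_eps\<close> puts no constraint on the coordinates \<open>\<ge> b\<close>, so it is not compact; we maximize
  over the compact set of its members vanishing there, which by \<open>Psi_cong\<close> loses nothing.\<close>

lemma maximizer_exists:
  assumes "0 \<le> \<epsilon>" "\<epsilon> \<le> 1 / real b" "j < b"
  obtains p q where "is_maximizer b j \<epsilon> p q"
proof -
  define K where "K = PiE UNIV (\<lambda>i. if i < b then {\<epsilon>..1} else {0}) \<inter> {p. (\<Sum>i<b. p i) = 1}"
  have K_sub: "K \<subseteq> prob_vecs_eps b \<epsilon>"
  proof
    fix p assume "p \<in> K"
    then have "\<epsilon> \<le> p i" if "i < b" for i
      using that by (auto simp: K_def PiE_iff dest: spec[of _ i])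
    then show "p \<in> prob_vecs_eps b \<epsilon>"
      using \<open>p \<in> K\<close> assms(1) by (auto simp: K_def prob_vecs_eps_def prob_vecs_def intro: order_trans)
  qed
  have restrict_mem: "(\<lambda>i. if i < b then p i else 0) \<in> K" if "p \<in> prob_vecs_eps b \<epsilon>" for p
  proof -
    have "p i \<le> 1" if "i < b" for i
      using \<open>p \<in> prob_vecs_eps b \<epsilon>\<close> that member_le_sum[of i "{..<b}" p]
      by (auto simp: prob_vecs_eps_def prob_vecs_def)
    then show ?thesis
      using that by (auto simp: K_def PiE_iff prob_vecs_eps_def prob_vecs_def)
  qed
  have "(\<lambda>i. if i < b then 1 / real b else 0) \<in> K"
    using assms by (auto simp: K_def PiE_iff)
  then have "K \<times> K \<noteq> {}"
    by blast
  moreover have "compact (K \<times> K)"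
    unfolding K_def by (intro compact_Times compact_simplex_box)
  ultimately obtain z where z: "z \<in> K \<times> K" "\<forall>y \<in> K \<times> K. Psi b j (fst y) (snd y) \<le> Psi b j (fst z) (snd z)"
    using continuous_attains_sup[OF _ _ continuous_on_Psi] by blast
  have "Psi b j p q \<le> Psi b j (fst z) (snd z)" if "p \<in> prob_vecs_eps b \<epsilon>" "q \<in> prob_vecs_eps b \<epsilon>" for p q
    using z(2) restrict_mem[OF that(1)] restrict_mem[OF that(2)]
      Psi_cong[OF assms(3), of p "\<lambda>i. if i < b then p i else 0" q "\<lambda>i. if i < b then q i else 0"]
    by force
  with z(1) K_sub show ?thesis
    by (intro that[of "fst z" "snd z"]) (auto simp: is_maximizer_def)
qed

lemma maximizer_eq_if_eq:
  assumes mx: "is_maximizer b j \<epsilon> p q" and "0 < \<epsilon>" "2 \<le> j" "j < b"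
    and kl: "k < b" "l < b" "k \<noteq> l" and "p k = p l"
  shows "q k = q l"
proof (rule ccontr)
  assume "q k \<noteq> q l"
  have p: "p \<in> prob_vecs_eps b \<epsilon>" and q: "q \<in> prob_vecs_eps b \<epsilon>"
    using mx by (auto simp: is_maximizer_def)
  then have "0 < p i" "0 < q i" if "i < b" for i
    using that \<open>0 < \<epsilon>\<close> by (auto simp: prob_vecs_eps_def intro: less_le_trans)
  then have "Psi b j p q < Psi b j p (pair_avg k l q)"
    using assms(3-8) \<open>q k \<noteq> q l\<close> by (intro Psi_lt_Psi_pair_avg) auto
  moreover have "pair_avg k l q \<in> prob_vecs_eps b \<epsilon>"
  proof -
    have "\<epsilon> \<le> q k" "\<epsilon> \<le> q l"
      using q kl by (auto simp: prob_vecs_eps_def)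
    then have "pair_line k l 0 q \<in> prob_vecs_eps b \<epsilon>"
      by (intro pair_line_mem_prob_vecs_eps[OF q _ kl]) (use \<open>0 < \<epsilon>\<close> in auto)
    then show ?thesis
      by simp
  qed
  ultimately show False
    using mx p by (auto simp: is_maximizer_def not_le[symmetric])
qed

lemma exists_scale_to_boundary:
  fixes A B X Y :: real
  assumes "0 \<le> A" "0 \<le> B" "A \<noteq> 0 \<or> B \<noteq> 0" "A < X" "B < Y"
  obtains T where "1 \<le> T" "T * A \<le> X" "T * B \<le> Y" "T * A = X \<or> T * B = Y"
proof (cases "B * X \<le> A * Y")
  case True
  with assms have "0 < A"
    by (metis less_eq_real_def mult_eq_0_iff mult_pos_pos not_le order.strict_trans1)
  with True assms show ?thesis
    by (intro that[of "X / A"]) (auto simp: field_simps)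
next
  case False
  with assms have "0 < B"
    by (metis less_eq_real_def mult_zero_left order.strict_trans2 zero_le_mult_iff)
  with False assms show ?thesis
    by (intro that[of "Y / B"]) (auto simp: field_simps)
qed

definition above_both :: "nat \<Rightarrow> real \<Rightarrow> (nat \<Rightarrow> real) \<Rightarrow> (nat \<Rightarrow> real) \<Rightarrow> nat set" where
  "above_both b \<epsilon> p q = {i \<in> {..<b}. \<epsilon> < p i \<and> \<epsilon> < q i}"

lemma above_both_pair_line_psubset:
  assumes "k \<noteq> l" "0 \<le> T" and above: "k \<in> above_both b \<epsilon> p q" "l \<in> above_both b \<epsilon> p q"
    and "T * \<bar>(p k - p l) / 2\<bar> = (p k + p l) / 2 - \<epsilon> \<or> T * \<bar>(q k - q l) / 2\<bar> = (q k + q l) / 2 - \<epsilon>"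
  shows "above_both b \<epsilon> (pair_line k l T p) (pair_line k l T q) \<subset> above_both b \<epsilon> p q"
proof -
  have sub: "above_both b \<epsilon> (pair_line k l T p) (pair_line k l T q) \<subseteq> above_both b \<epsilon> p q"
    using above by (auto simp: above_both_def pair_line_other) (metis pair_line_other)+
  have min_eq: "min (pair_line k l T u k) (pair_line k l T u l) = (u k + u l) / 2 - T * \<bar>(u k - u l) / 2\<bar>" for u
  proof -
    have "min (m + x) (m - x) = m - \<bar>x\<bar>" for m x :: real
      by (simp add: min_def abs_if)
    then show ?thesis
      using assms(2) unfolding pair_line_apply[OF assms(1)] by (simp add: abs_mult)
  qed
  have "min (pair_line k l T p k) (pair_line k l T p l) = \<epsilon> \<or>
      min (pair_line k l T q k) (pair_line k l T q l) = \<epsilon>"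
    using assms(5) unfolding min_eq by (elim disjE; linarith)
  then have "k \<notin> above_both b \<epsilon> (pair_line k l T p) (pair_line k l T q) \<or>
      l \<notin> above_both b \<epsilon> (pair_line k l T p) (pair_line k l T q)"
    by (auto simp: above_both_def min_def split: if_splits)
  with sub show ?thesis
    using above by auto
qed

lemma exists_pair_line_to_boundary:
  assumes p: "p \<in> prob_vecs_eps b \<epsilon>" and q: "q \<in> prob_vecs_eps b \<epsilon>" and "0 \<le> \<epsilon>"
    and kl: "k < b" "l < b" "k \<noteq> l" and above: "k \<in> above_both b \<epsilon> p q" "l \<in> above_both b \<epsilon> p q"
    and ne: "\<not> (p k = p l \<and> q k = q l)"
  obtains T where "1 \<le> T"
    "\<forall>t. \<bar>t\<bar> \<le> T \<longrightarrow> pair_line k l t p \<in> prob_vecs_eps b \<epsilon> \<and> pair_line k l t q \<in> prob_vecs_eps b \<epsilon>"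
    "above_both b \<epsilon> (pair_line k l T p) (pair_line k l T q) \<subset> above_both b \<epsilon> p q"
proof -
  have on_line: "pair_line k l t u \<in> prob_vecs_eps b \<epsilon>"
    if "u \<in> prob_vecs_eps b \<epsilon>" "\<bar>t\<bar> * \<bar>(u k - u l) / 2\<bar> \<le> (u k + u l) / 2 - \<epsilon>" for t u
    using pair_line_mem_prob_vecs_eps[OF that(1) \<open>0 \<le> \<epsilon>\<close> kl] that(2) by (simp add: abs_mult)
  have "\<bar>(p k - p l) / 2\<bar> < (p k + p l) / 2 - \<epsilon>" "\<bar>(q k - q l) / 2\<bar> < (q k + q l) / 2 - \<epsilon>"
    using above by (auto simp: above_both_def abs_if field_simps)
  moreover have "\<bar>(p k - p l) / 2\<bar> \<noteq> 0 \<or> \<bar>(q k - q l) / 2\<bar> \<noteq> 0"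
    using ne by auto
  ultimately obtain T where T: "1 \<le> T" "T * \<bar>(p k - p l) / 2\<bar> \<le> (p k + p l) / 2 - \<epsilon>"
      "T * \<bar>(q k - q l) / 2\<bar> \<le> (q k + q l) / 2 - \<epsilon>"
      "T * \<bar>(p k - p l) / 2\<bar> = (p k + p l) / 2 - \<epsilon> \<or> T * \<bar>(q k - q l) / 2\<bar> = (q k + q l) / 2 - \<epsilon>"
    using exists_scale_to_boundary[OF abs_ge_zero abs_ge_zero] by metis
  have "pair_line k l t p \<in> prob_vecs_eps b \<epsilon> \<and> pair_line k l t q \<in> prob_vecs_eps b \<epsilon>" if "\<bar>t\<bar> \<le> T" for t
  proof -
    have "\<bar>t\<bar> * \<bar>(p k - p l) / 2\<bar> \<le> (p k + p l) / 2 - \<epsilon>" "\<bar>t\<bar> * \<bar>(q k - q l) / 2\<bar> \<le> (q k + q l) / 2 - \<epsilon>"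
      using order_trans[OF mult_right_mono[OF that abs_ge_zero] T(2)]
        order_trans[OF mult_right_mono[OF that abs_ge_zero] T(3)] .
    then show ?thesis
      using on_line[OF p] on_line[OF q] by blast
  qed
  moreover have "above_both b \<epsilon> (pair_line k l T p) (pair_line k l T q) \<subset> above_both b \<epsilon> p q"
    using T(1,4) by (intro above_both_pair_line_psubset kl(3) above) simp_all
  ultimately show ?thesis
    using T(1) by (intro that) auto
qed

lemma maximizer_eq_if_above_both:
  assumes mx: "is_maximizer b j \<epsilon> p q"
    and least: "\<And>p' q'. is_maximizer b j \<epsilon> p' q' \<Longrightarrow> card (above_both b \<epsilon> p q) \<le> card (above_both b \<epsilon> p' q')"
    and "0 \<le> \<epsilon>" and kl: "k < b" "l < b" "k \<noteq> l" and above: "k \<in> above_both b \<epsilon> p q" "l \<in> above_both b \<epsilon> p q"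
  shows "p k = p l \<and> q k = q l"
proof (rule ccontr)
  assume ne: "\<not> (p k = p l \<and> q k = q l)"
  have p: "p \<in> prob_vecs_eps b \<epsilon>" and q: "q \<in> prob_vecs_eps b \<epsilon>"
    using mx by (auto simp: is_maximizer_def)
  obtain T where T: "1 \<le> T"
    "\<forall>t. \<bar>t\<bar> \<le> T \<longrightarrow> pair_line k l t p \<in> prob_vecs_eps b \<epsilon> \<and> pair_line k l t q \<in> prob_vecs_eps b \<epsilon>"
    "above_both b \<epsilon> (pair_line k l T p) (pair_line k l T q) \<subset> above_both b \<epsilon> p q"
    by (rule exists_pair_line_to_boundary[OF p q \<open>0 \<le> \<epsilon>\<close> kl above ne])
  let ?A = "Psi b j (pair_avg k l p) (pair_avg k l q)"
  have "?A \<le> Psi b j p q"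
    using mx T(2)[rule_format, of 0] T(1) by (simp add: is_maximizer_def)
  then have "1 * (Psi b j p q - ?A) \<le> T\<^sup>2 * (Psi b j p q - ?A)"
    using T(1) by (intro mult_right_mono) (simp_all add: one_le_power)
  then have "Psi b j p q \<le> Psi b j (pair_line k l T p) (pair_line k l T q)"
    using Psi_pair_line[OF kl, of j T p q] by simp
  moreover have "pair_line k l T p \<in> prob_vecs_eps b \<epsilon>" "pair_line k l T q \<in> prob_vecs_eps b \<epsilon>"
    using T(1) T(2)[rule_format, of T] by simp_all
  ultimately have "is_maximizer b j \<epsilon> (pair_line k l T p) (pair_line k l T q)"
    using mx by (auto simp: is_maximizer_def intro: order_trans)
  moreover have "card (above_both b \<epsilon> (pair_line k l T p) (pair_line k l T q)) < card (above_both b \<epsilon> p q)"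
    using T(3) by (intro psubset_card_mono) (simp add: above_both_def)
  ultimately show False
    using least by (meson not_le)
qed

lemma sum_block3:
  assumes "l1 + l2 \<le> b"
  shows "(\<Sum>i<b. block3 l1 l2 x y z i) = real l1 * x + real l2 * y + real (b - l1 - l2) * z"
proof -
  have "(\<Sum>i<b. block3 l1 l2 x y z i) = (\<Sum>i\<in>{0..<l1}. block3 l1 l2 x y z i) +
      (\<Sum>i\<in>{l1..<l1 + l2}. block3 l1 l2 x y z i) + (\<Sum>i\<in>{l1 + l2..<b}. block3 l1 l2 x y z i)"
    using assms by (simp add: sum.atLeastLessThan_concat atLeast0LessThan[symmetric])
  also have "\<dots> = (\<Sum>i\<in>{0..<l1}. x) + (\<Sum>i\<in>{l1..<l1 + l2}. y) + (\<Sum>i\<in>{l1 + l2..<b}. z)"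
    by (intro arg_cong2[where f = "(+)"] sum.cong) (auto simp: block3_def)
  finally show ?thesis
    using assms by (simp add: of_nat_diff)
qed

lemma block3_weights_eq_one:
  assumes "p \<in> prob_vecs b" "\<sigma> permutes {..<b}" "l1 + l2 \<le> b"
    and "\<And>i. i < b \<Longrightarrow> p (\<sigma> i) = block3 l1 l2 x y z i"
  shows "real l1 * x + real l2 * y + real (b - l1 - l2) * z = 1"
proof -
  have "(\<Sum>i<b. p (\<sigma> i)) = (\<Sum>i<b. p i)"
    using sum.reindex_bij_betw[OF permutes_imp_bij[OF assms(2)], of p] by simp
  also have "\<dots> = 1"
    using assms(1) by (simp add: prob_vecs_def)
  finally show ?thesis
    using assms(4) sum_block3[OF assms(3), of x y z] by simp
qed

lemma permutes_onto_blocks: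
  fixes A B C :: "nat set"
  assumes "A \<union> B \<union> C = {..<n}" "A \<inter> B = {}" "A \<inter> C = {}" "B \<inter> C = {}"
  obtains \<sigma> where "\<sigma> permutes {..<n}" "card A + card B \<le> n" "\<sigma> ` {..<card A} = A"
    "\<sigma> ` {card A..<card A + card B} = B" "\<sigma> ` {card A + card B..<n} = C"
proof -
  have fin: "finite A" "finite B" "finite C"
    using assms(1) by (metis finite_Un finite_lessThan)+
  have card_sum: "card A + card B + card C = n"
    using assms fin by (metis card_Un_disjoint card_lessThan Int_Un_distrib2 Un_empty_left finite_Un)
  obtain f where f: "bij_betw f {..<card A} A"
    using fin(1) by (metis ex_bij_betw_nat_finite lessThan_atLeast0)
  obtain g where g: "bij_betw g {card A..<card A + card B} B"
    using finite_same_card_bij[of "{card A..<card A + card B}" B] fin(2) by auto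
  obtain h where h: "bij_betw h {card A + card B..<n} C"
    using finite_same_card_bij[of "{card A + card B..<n}" C] fin(3) card_sum by auto
  define \<sigma> where "\<sigma> i = (if i < card A then f i else if i < card A + card B then g i else if i < n then h i else i)" for i
  have \<sigma>: "bij_betw \<sigma> {..<card A} A" "bij_betw \<sigma> {card A..<card A + card B} B" "bij_betw \<sigma> {card A + card B..<n} C"
    using f g h by (auto simp: \<sigma>_def elim!: bij_betw_cong[THEN iffD1, rotated])
  have "bij_betw \<sigma> ({..<card A} \<union> {card A..<card A + card B} \<union> {card A + card B..<n}) (A \<union> B \<union> C)"
    using assms(2-4) by (intro bij_betw_combine \<sigma>) auto
  moreover have "{..<card A} \<union> {card A..<card A + card B} \<union> {card A + card B..<n} = {..<n}"
    using card_sum by auto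
  ultimately have "bij_betw \<sigma> {..<n} {..<n}"
    using assms(1) by simp
  then have "\<sigma> permutes {..<n}"
    by (rule bij_imp_permutes) (use card_sum in \<open>simp add: \<sigma>_def\<close>)
  then show ?thesis
    by (rule that)
      (use card_sum bij_betw_imp_surj_on[OF \<sigma>(1)] bij_betw_imp_surj_on[OF \<sigma>(2)]
        bij_betw_imp_surj_on[OF \<sigma>(3)] in simp_all)
qed

lemma exists_permutation_sorting_blocks:
  fixes p q :: "nat \<Rightarrow> real"
  assumes "\<And>i. i < b \<Longrightarrow> \<epsilon> \<le> p i" "\<And>i. i < b \<Longrightarrow> \<epsilon> \<le> q i"
  obtains \<sigma> l1 l2 where "\<sigma> permutes {..<b}" "l1 + l2 \<le> b" "\<forall>i<l1. p (\<sigma> i) = \<epsilon>"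
    "\<forall>i. l1 \<le> i \<and> i < l1 + l2 \<longrightarrow> q (\<sigma> i) = \<epsilon>"
    "\<forall>i. l1 + l2 \<le> i \<and> i < b \<longrightarrow> \<epsilon> < p (\<sigma> i) \<and> \<epsilon> < q (\<sigma> i)"
proof -
  define B1 where "B1 = {i \<in> {..<b}. p i = \<epsilon>}"
  define B2 where "B2 = {i \<in> {..<b}. p i \<noteq> \<epsilon> \<and> q i = \<epsilon>}"
  define B3 where "B3 = {i \<in> {..<b}. p i \<noteq> \<epsilon> \<and> q i \<noteq> \<epsilon>}"
  obtain \<sigma> where \<sigma>: "\<sigma> permutes {..<b}" "card B1 + card B2 \<le> b" "\<sigma> ` {..<card B1} = B1"
    "\<sigma> ` {card B1..<card B1 + card B2} = B2" "\<sigma> ` {card B1 + card B2..<b} = B3"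
    by (rule permutes_onto_blocks[of B1 B2 B3 b]) (auto simp: B1_def B2_def B3_def)
  show ?thesis
  proof (rule that[OF \<sigma>(1,2)])
    show "\<forall>i<card B1. p (\<sigma> i) = \<epsilon>"
      using \<sigma>(3) by (auto simp: B1_def)
    show "\<forall>i. card B1 \<le> i \<and> i < card B1 + card B2 \<longrightarrow> q (\<sigma> i) = \<epsilon>"
      using \<sigma>(4) by (auto simp: B2_def)
    show "\<forall>i. card B1 + card B2 \<le> i \<and> i < b \<longrightarrow> \<epsilon> < p (\<sigma> i) \<and> \<epsilon> < q (\<sigma> i)"
    proof (intro allI impI)
      fix i assume "card B1 + card B2 \<le> i \<and> i < b"
      then have "\<sigma> i \<in> B3"
        using \<sigma>(5) by auto
      then have "\<sigma> i < b" "p (\<sigma> i) \<noteq> \<epsilon>" "q (\<sigma> i) \<noteq> \<epsilon>"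
        by (simp_all add: B3_def)
      then show "\<epsilon> < p (\<sigma> i) \<and> \<epsilon> < q (\<sigma> i)"
        using assms[of "\<sigma> i"] by (auto simp: less_le)
    qed
  qed
qed

lemma exists_block3_form:
  fixes p q :: "nat \<Rightarrow> real"
  assumes ge: "\<And>i. i < b \<Longrightarrow> \<epsilon> \<le> p i" "\<And>i. i < b \<Longrightarrow> \<epsilon> \<le> q i"
    and eq_at_p_eps: "\<And>x y. x < b \<Longrightarrow> y < b \<Longrightarrow> p x = \<epsilon> \<Longrightarrow> p y = \<epsilon> \<Longrightarrow> q x = q y"
    and eq_at_q_eps: "\<And>x y. x < b \<Longrightarrow> y < b \<Longrightarrow> q x = \<epsilon> \<Longrightarrow> q y = \<epsilon> \<Longrightarrow> p x = p y"
    and eq_above: "\<And>x y. x < b \<Longrightarrow> y < b \<Longrightarrow> \<epsilon> < p x \<Longrightarrow> \<epsilon> < q x \<Longrightarrow> \<epsilon> < p y \<Longrightarrow> \<epsilon> < q y \<Longrightarrow>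
      p x = p y \<and> q x = q y"
  obtains \<sigma> l1 l2 \<alpha> \<beta> \<delta> \<eta> where "\<sigma> permutes {..<b}" "l1 + l2 \<le> b"
    "\<alpha> \<ge> \<epsilon>" "\<beta> \<ge> \<epsilon>" "\<delta> \<ge> \<epsilon>" "\<eta> \<ge> \<epsilon>"
    "\<forall>i<b. p (\<sigma> i) = block3 l1 l2 \<epsilon> \<alpha> \<beta> i \<and> q (\<sigma> i) = block3 l1 l2 \<delta> \<epsilon> \<eta> i"
proof -
  obtain \<sigma> l1 l2 where \<sigma>: "\<sigma> permutes {..<b}" "l1 + l2 \<le> b" "\<forall>i<l1. p (\<sigma> i) = \<epsilon>"
    "\<forall>i. l1 \<le> i \<and> i < l1 + l2 \<longrightarrow> q (\<sigma> i) = \<epsilon>"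
    "\<forall>i. l1 + l2 \<le> i \<and> i < b \<longrightarrow> \<epsilon> < p (\<sigma> i) \<and> \<epsilon> < q (\<sigma> i)"
    by (rule exists_permutation_sorting_blocks[OF ge])
  have lt: "\<sigma> i < b" if "i < b" for i
    using permutes_in_image[OF \<sigma>(1)] that by simp
  define \<delta> where "\<delta> = (if l1 = 0 then \<epsilon> else q (\<sigma> 0))"
  define \<alpha> where "\<alpha> = (if l2 = 0 then \<epsilon> else p (\<sigma> l1))"
  define \<beta> where "\<beta> = (if l1 + l2 < b then p (\<sigma> (l1 + l2)) else \<epsilon>)"
  define \<eta> where "\<eta> = (if l1 + l2 < b then q (\<sigma> (l1 + l2)) else \<epsilon>)"
  have "\<alpha> \<ge> \<epsilon>" "\<beta> \<ge> \<epsilon>" "\<delta> \<ge> \<epsilon>" "\<eta> \<ge> \<epsilon>"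
    using ge lt \<sigma>(2) by (auto simp: \<alpha>_def \<beta>_def \<delta>_def \<eta>_def)
  moreover have "\<forall>i<b. p (\<sigma> i) = block3 l1 l2 \<epsilon> \<alpha> \<beta> i \<and> q (\<sigma> i) = block3 l1 l2 \<delta> \<epsilon> \<eta> i"
    (is "\<forall>i<b. ?block i")
  proof (intro allI impI)
    fix i assume "i < b"
    consider "i < l1" | "l1 \<le> i" "i < l1 + l2" | "l1 + l2 \<le> i"
      by linarith
    then show "?block i"
    proof cases
      case 1
      then have "q (\<sigma> i) = q (\<sigma> 0)"
        using eq_at_p_eps[OF lt[of i] lt[of 0]] \<sigma>(3) \<open>i < b\<close> by simp
      then show ?thesis
        using 1 \<sigma>(3) by (simp add: \<delta>_def block3_def)
    next
      case 2
      then have "p (\<sigma> i) = p (\<sigma> l1)"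
        using eq_at_q_eps[OF lt[of i] lt[of l1]] \<sigma>(4) \<open>i < b\<close> by simp
      then show ?thesis
        using 2 \<sigma>(4) by (simp add: \<alpha>_def block3_def)
    next
      case 3
      then have "p (\<sigma> i) = p (\<sigma> (l1 + l2)) \<and> q (\<sigma> i) = q (\<sigma> (l1 + l2))"
        using eq_above[OF lt[of i] lt[of "l1 + l2"]] \<sigma>(5) \<open>i < b\<close> by simp
      then show ?thesis
        using 3 \<open>i < b\<close> by (simp add: \<beta>_def \<eta>_def block3_def)
    qed
  qed
  ultimately show ?thesis
    by (rule that[OF \<sigma>(1,2)])
qed

lemma maximizer_with_fewest_above_both:
  assumes "0 \<le> \<epsilon>" "\<epsilon> \<le> 1 / real b" "j < b"
  obtains p q where "is_maximizer b j \<epsilon> p q"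
    "\<And>p' q'. is_maximizer b j \<epsilon> p' q' \<Longrightarrow> card (above_both b \<epsilon> p q) \<le> card (above_both b \<epsilon> p' q')"
proof -
  obtain p q where "is_maximizer b j \<epsilon> p q"
    using maximizer_exists[OF assms] .
  then show ?thesis
    using ex_has_least_nat[of "\<lambda>(p, q). is_maximizer b j \<epsilon> p q" "(p, q)"
        "\<lambda>(p, q). card (above_both b \<epsilon> p q)"] that
    by auto
qed

lemma fewest_above_maximizer_block3_form:
  assumes mx: "is_maximizer b j \<epsilon> p q"
    and least: "\<And>p' q'. is_maximizer b j \<epsilon> p' q' \<Longrightarrow> card (above_both b \<epsilon> p q) \<le> card (above_both b \<epsilon> p' q')"
    and "0 < \<epsilon>" "2 \<le> j" "j < b"
  obtains \<sigma> l1 l2 \<alpha> \<beta> \<delta> \<eta> where "\<sigma> permutes {..<b}" "l1 + l2 \<le> b"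
    "\<alpha> \<ge> \<epsilon>" "\<beta> \<ge> \<epsilon>" "\<delta> \<ge> \<epsilon>" "\<eta> \<ge> \<epsilon>"
    "\<forall>i<b. p (\<sigma> i) = block3 l1 l2 \<epsilon> \<alpha> \<beta> i \<and> q (\<sigma> i) = block3 l1 l2 \<delta> \<epsilon> \<eta> i"
proof (rule exists_block3_form)
  show "\<epsilon> \<le> p i" "\<epsilon> \<le> q i" if "i < b" for i
    using mx that by (auto simp: is_maximizer_def prob_vecs_eps_def)
  show "q x = q y" if "x < b" "y < b" "p x = \<epsilon>" "p y = \<epsilon>" for x y
    using maximizer_eq_if_eq[OF mx assms(3-5) that(1,2)] that by (cases "x = y") auto
  show "p x = p y" if "x < b" "y < b" "q x = \<epsilon>" "q y = \<epsilon>" for x y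
    using maximizer_eq_if_eq[OF is_maximizer_swap[OF mx] assms(3-5) that(1,2)] that by (cases "x = y") auto
  show "p x = p y \<and> q x = q y" if "x < b" "y < b" "\<epsilon> < p x" "\<epsilon> < q x" "\<epsilon> < p y" "\<epsilon> < q y" for x y
    using maximizer_eq_if_above_both[OF mx least _ that(1,2)] that assms(3)
    by (cases "x = y") (auto simp: above_both_def)
qed

theorem mainTheorem14:
  fixes b j :: nat and \<epsilon> :: real
  assumes "b \<ge> 3" and "2 \<le> j" and "j \<le> b - 1" and "0 < \<epsilon>" and "\<epsilon> < 1 / real b"
  shows "\<exists>p q. p \<in> prob_vecs_eps b \<epsilon> \<and> q \<in> prob_vecs_eps b \<epsilon> \<and>
           Psi b j p q = M1hat b j \<epsilon> \<and>
           (\<exists>\<sigma> l1 l2 \<alpha> \<beta> \<delta> \<eta>. \<sigma> permutes {..<b} \<and> l1 + l2 \<le> b \<and>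
              \<alpha> \<ge> \<epsilon> \<and> \<beta> \<ge> \<epsilon> \<and> \<delta> \<ge> \<epsilon> \<and> \<eta> \<ge> \<epsilon> \<and>
              real l1 * \<epsilon> + real l2 * \<alpha> + real (b - l1 - l2) * \<beta> = 1 \<and>
              real l1 * \<delta> + real l2 * \<epsilon> + real (b - l1 - l2) * \<eta> = 1 \<and>
              ((\<forall>i<b. p (\<sigma> i) = block3 l1 l2 \<epsilon> \<alpha> \<beta> i \<and> q (\<sigma> i) = block3 l1 l2 \<delta> \<epsilon> \<eta> i) \<or>
               (\<forall>i<b. q (\<sigma> i) = block3 l1 l2 \<epsilon> \<alpha> \<beta> i \<and> p (\<sigma> i) = block3 l1 l2 \<delta> \<epsilon> \<eta> i)))"
proof -
  have j: "j < b"
    using assms(1,3) by linarith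
  obtain p q where mx: "is_maximizer b j \<epsilon> p q"
    and least: "\<And>p' q'. is_maximizer b j \<epsilon> p' q' \<Longrightarrow> card (above_both b \<epsilon> p q) \<le> card (above_both b \<epsilon> p' q')"
    by (rule maximizer_with_fewest_above_both[of \<epsilon> b j]) (use assms(4,5) j in auto)
  obtain \<sigma> l1 l2 \<alpha> \<beta> \<delta> \<eta> where blocks: "\<sigma> permutes {..<b}" "l1 + l2 \<le> b"
    "\<alpha> \<ge> \<epsilon>" "\<beta> \<ge> \<epsilon>" "\<delta> \<ge> \<epsilon>" "\<eta> \<ge> \<epsilon>"
    "\<forall>i<b. p (\<sigma> i) = block3 l1 l2 \<epsilon> \<alpha> \<beta> i \<and> q (\<sigma> i) = block3 l1 l2 \<delta> \<epsilon> \<eta> i"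
    by (rule fewest_above_maximizer_block3_form[OF mx least assms(4,2) j])
  have p: "p \<in> prob_vecs_eps b \<epsilon>" and q: "q \<in> prob_vecs_eps b \<epsilon>"
    using mx by (auto simp: is_maximizer_def)
  then have "p \<in> prob_vecs b" "q \<in> prob_vecs b"
    by (simp_all add: prob_vecs_eps_def)
  have "real l1 * \<epsilon> + real l2 * \<alpha> + real (b - l1 - l2) * \<beta> = 1"
    using \<open>p \<in> prob_vecs b\<close> by (rule block3_weights_eq_one[OF _ blocks(1,2)]) (use blocks(7) in simp)
  moreover have "real l1 * \<delta> + real l2 * \<epsilon> + real (b - l1 - l2) * \<eta> = 1"
    using \<open>q \<in> prob_vecs b\<close> by (rule block3_weights_eq_one[OF _ blocks(1,2)]) (use blocks(7) in simp)
  ultimately show ?thesis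
    using p q blocks M1hat_eq_Psi_maximizer[OF mx, symmetric] by blast
qed

end
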